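(* Let $k\ge4$. For each $p\in\mathbb N_0(k)$, the Hammerstein equation $\int_0^1K_p(t,u;k)f^k(u)\,du=f(t)$, $t\in[0,1]$, has at least two distinct positive solutions $f\in C[0,1]$.
   Context: For integers $k\ge2$, $n\ge1$ and $x\in\mathbb R$: $P_{n,k}(x)=\left(1+\frac{x^{n-1}}{2}\right)^{k+1}-\left(1-\frac{x^{n-1}}{2}\right)^{k+1}$, and for $n>k$: $Q_{n,k}(x)=(k+1)x^{n-k}$. Fix an integer $k$ and, for each integer $n>k$, an arbitrary $\xi(k;n)\in(0,1)$ with $P_{n,k}(\xi(k;n))=Q_{n,k}(\xi(k;n))$. Let $\alpha=\limsup_{n\to\infty}\xi(k;n)^{n-1}$ and let $(n_p)_{p\in\mathbb N}$ be a strictly increasing sequence of integers $>k$ with $\xi(k;n_p)^{n_p-1}\to\alpha$. For $n>k$ put $$C_n(k)=\frac{\xi(k;n)^{3n-k-2}}{\frac{1}{k+2}\left[\left(1+\frac{\xi(k;n)^{n-1}}{2}\right)^{k+2}-\left(1-\frac{\xi(k;n)^{n-1}}{2}\right)^{k+2}\right]-\xi(k;n)^{n-k}},$$ $\gamma_p(k)=C_{n_p}(k)$, $\mathbb N_0(k)=\{p\in\mathbb N: |\gamma_p(k)|<4\}$, and for $p\in\mathbb N_0(k)$, $K_p(t,u;k)=1+\gamma_p(k)\left(t-\frac12\right)\left(u-\frac12\right)$, $t,u\in[0,1]$ (a strictly positive continuous kernel). *)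

theory Defs
  imports "HOL-Analysis.Analysis"
begin

definition P_poly :: "nat \<Rightarrow> nat \<Rightarrow> real \<Rightarrow> real" where
  "P_poly n k x = (1 + x ^ (n - 1) / 2) ^ (k + 1) - (1 - x ^ (n - 1) / 2) ^ (k + 1)"

definition Q_poly :: "nat \<Rightarrow> nat \<Rightarrow> real \<Rightarrow> real" where
  "Q_poly n k x = real (k + 1) * x ^ (n - k)"

text \<open>alpha = limsup of xi(k;n)^(n-1); xi is the chosen root function for fixed k.\<close>
definition alpha_lim :: "(nat \<Rightarrow> real) \<Rightarrow> real" where
  "alpha_lim xi = real_of_ereal (limsup (\<lambda>n. ereal (xi n ^ (n - 1))))"

definition C_const :: "nat \<Rightarrow> (nat \<Rightarrow> real) \<Rightarrow> nat \<Rightarrow> real" where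
  "C_const k xi n =
     xi n ^ (3 * n - k - 2) /
     ((1 / real (k + 2)) * ((1 + xi n ^ (n - 1) / 2) ^ (k + 2) - (1 - xi n ^ (n - 1) / 2) ^ (k + 2))
       - xi n ^ (n - k))"

definition gamma_seq :: "nat \<Rightarrow> (nat \<Rightarrow> real) \<Rightarrow> (nat \<Rightarrow> nat) \<Rightarrow> nat \<Rightarrow> real" where
  "gamma_seq k xi np p = C_const k xi (np p)"

definition N0 :: "nat \<Rightarrow> (nat \<Rightarrow> real) \<Rightarrow> (nat \<Rightarrow> nat) \<Rightarrow> nat set" where
  "N0 k xi np = {p. \<bar>gamma_seq k xi np p\<bar> < 4}"

definition kernel :: "nat \<Rightarrow> (nat \<Rightarrow> real) \<Rightarrow> (nat \<Rightarrow> nat) \<Rightarrow> nat \<Rightarrow> real \<Rightarrow> real \<Rightarrow> real" where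
  "kernel k xi np p t u = 1 + gamma_seq k xi np p * (t - 1/2) * (u - 1/2)"

end

theory Submission
  imports Defs
begin

(* The Hammerstein operator with kernel K(t,u) = 1 + c (t - 1/2)(u - 1/2) on [0,1] has rank
   two: (Hf)(t) = M0(f) + c (t - 1/2) M1(f), with the moments M0(f) = int f and
   M1(f) = int (u - 1/2) f(u) du.  Hence every solution of H(f^k) = f is affine, and
   solutions can be searched for among affine functions.  The constant 1 is always a fixed point (M0 = 1, M1 = 0), and
   g(u) = x (1 + y (u - 1/2)) is one exactly when the two moments of g^k match, which
   reduces to two scalar identities in terms of the "power gap"
   G_m(y) = ((1 + y/2)^m - (1 - y/2)^m) / m.
   For the data of the theorem, x = xi(k;n) and y = x^(n-1): the root equation P = Q says
   G_(k+1)(y) = x^(n-k), which is the first identity; the denominator of C_n(k) is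
   G_(k+2)(y) - G_(k+1)(y), which is positive since G_(k+2) - G_(k+1) is increasing in y,
   and the definition of gamma_p(k) is then exactly the second identity. *)

(* The power gap G_m(y); it is (1/y) times the integral over [0,1] of (1 + y(u - 1/2))^(m-1). *)
definition power_gap :: "nat \<Rightarrow> real \<Rightarrow> real" where
  "power_gap m y = ((1 + y/2) ^ m - (1 - y/2) ^ m) / real m"

lemma integral_01_by_antiderivative:
  fixes F f :: "real \<Rightarrow> real"
  assumes "\<And>u. (F has_real_derivative f u) (at u)"
  shows "integral {0..1} f = F 1 - F 0"
proof -
  have "(f has_integral F 1 - F 0) {0..1}"
    using assms by (intro fundamental_theorem_of_calculus)
      (auto simp flip: has_real_derivative_iff_has_vector_derivative
            intro: has_field_derivative_at_within)
  then show ?thesis by (rule integral_unique)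
qed

lemma integral_affine_power:
  fixes y :: real
  assumes "y \<noteq> 0"
  shows "integral {0..1} (\<lambda>u. (1 + y*(u - 1/2)) ^ m) = power_gap (Suc m) y / y"
proof -
  define F where "F u = (1 + y*(u - 1/2)) ^ Suc m / (real (Suc m) * y)" for u
  have "(F has_real_derivative (1 + y*(u - 1/2)) ^ m) (at u)" for u
  proof -
    have "((\<lambda>u. (1 + y*(u - 1/2)) ^ Suc m) has_real_derivative
        real (Suc m) * (1 + y*(u - 1/2)) ^ m * y) (at u)"
      by (auto intro!: derivative_eq_intros simp del: power_Suc)
    then have "(F has_real_derivative real (Suc m) * (1 + y*(u - 1/2)) ^ m * y / (real (Suc m) * y)) (at u)"
      unfolding F_def by (rule DERIV_cdivide)
    then show ?thesis using assms by (simp del: of_nat_Suc power_Suc)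
  qed
  then have "integral {0..1} (\<lambda>u. (1 + y*(u - 1/2)) ^ m) = F 1 - F 0"
    by (rule integral_01_by_antiderivative)
  also have "\<dots> = power_gap (Suc m) y / y"
    unfolding F_def power_gap_def by (simp add: diff_divide_distrib)
  finally show ?thesis .
qed

(* First moment of an affine power: since (u - 1/2) W = (W - 1)/y for W = 1 + y(u - 1/2),
   it is a difference of two zeroth moments. *)
lemma integral_affine_power_first_moment:
  fixes y :: real
  assumes "y \<noteq> 0"
  shows "integral {0..1} (\<lambda>u. (u - 1/2) * (1 + y*(u - 1/2)) ^ m)
           = (power_gap (m + 2) y - power_gap (m + 1) y) / y^2"
proof -
  have split: "(u - 1/2) * (1 + y*(u - 1/2)) ^ m
      = ((1 + y*(u - 1/2)) ^ Suc m - (1 + y*(u - 1/2)) ^ m) / y" for u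
    using assms by (simp add: field_simps)
  have integrable: "(\<lambda>u. (1 + y*(u - 1/2)) ^ j) integrable_on {0..1}" for j
    by (intro integrable_continuous_interval continuous_intros)
  show ?thesis
    unfolding split integral_divide integral_diff[OF integrable integrable]
    using assms by (simp add: integral_affine_power power2_eq_square diff_divide_distrib
        del: power_Suc)
qed

lemma rank_two_kernel_integral:
  fixes h :: "real \<Rightarrow> real"
  assumes "continuous_on {0..1} h"
  shows "integral {0..1} (\<lambda>u. (1 + c*(t - 1/2)*(u - 1/2)) * h u)
           = integral {0..1} h + c*(t - 1/2) * integral {0..1} (\<lambda>u. (u - 1/2) * h u)"
proof -
  have h: "h integrable_on {0..1}"
    using assms by (rule integrable_continuous_interval)
  have moment: "(\<lambda>u. c*(t - 1/2) * ((u - 1/2) * h u)) integrable_on {0..1}"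
    using assms by (intro integrable_continuous_interval continuous_intros)
  have "(\<lambda>u. (1 + c*(t - 1/2)*(u - 1/2)) * h u) = (\<lambda>u. h u + c*(t - 1/2) * ((u - 1/2) * h u))"
    by (auto simp: algebra_simps)
  then show ?thesis
    by (simp only: integral_add[OF h moment] integral_mult_right)
qed

definition hammerstein_solution :: "(real \<Rightarrow> real \<Rightarrow> real) \<Rightarrow> nat \<Rightarrow> (real \<Rightarrow> real) \<Rightarrow> bool" where
  "hammerstein_solution K k f \<longleftrightarrow>
     continuous_on {0..1} f \<and> (\<forall>t\<in>{0..1}. f t > 0) \<and>
     (\<forall>t\<in>{0..1}. integral {0..1} (\<lambda>u. K t u * f u ^ k) = f t)"

(* The constant 1 solves the equation for every such kernel, as int (u - 1/2) du = 0. *)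
lemma constant_one_solution:
  "hammerstein_solution (\<lambda>t u. 1 + c*(t - 1/2)*(u - 1/2)) k (\<lambda>_. 1)"
proof -
  have "integral {0..1} (\<lambda>u. u - 1/2 :: real) = (\<lambda>u. u^2/2 - u/2) 1 - (\<lambda>u. u^2/2 - u/2) 0"
    by (rule integral_01_by_antiderivative) (auto intro!: derivative_eq_intros)
  then have "integral {0..1} (\<lambda>u. (1 + c*(t - 1/2)*(u - 1/2)) * 1 ^ k) = 1" for t
    using rank_two_kernel_integral[of "\<lambda>_. 1" c t] by simp
  then show ?thesis
    unfolding hammerstein_solution_def by simp
qed

lemma affine_solution:
  fixes x y c :: real
  assumes "0 < x" "0 < y" "y < 2"
    and mass: "x^k * power_gap (k + 1) y = x * y"
    and moment: "c * x^k * (power_gap (k + 2) y - power_gap (k + 1) y) = x * y^3"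
  shows "hammerstein_solution (\<lambda>t u. 1 + c*(t - 1/2)*(u - 1/2)) k (\<lambda>u. x * (1 + y*(u - 1/2)))"
proof -
  define W where "W u = 1 + y*(u - 1/2)" for u
  have W_pos: "W t > 0" if "t \<in> {0..1}" for t
  proof -
    have "y*(t - 1/2) \<ge> y*(-1/2)" using assms that by (intro mult_left_mono) auto
    then show ?thesis unfolding W_def using assms by linarith
  qed
  have fixed_point: "integral {0..1} (\<lambda>u. (1 + c*(t - 1/2)*(u - 1/2)) * (x * W u) ^ k) = x * W t"
    for t
  proof -
    have "integral {0..1} (\<lambda>u. (1 + c*(t - 1/2)*(u - 1/2)) * (x * W u) ^ k)
        = integral {0..1} (\<lambda>u. x^k * W u ^ k)
          + c*(t - 1/2) * integral {0..1} (\<lambda>u. (u - 1/2) * (x^k * W u ^ k))"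
      unfolding power_mult_distrib W_def
      by (intro rank_two_kernel_integral continuous_intros)
    also have "\<dots> = x^k * (power_gap (k + 1) y / y)
          + c*(t - 1/2) * (x^k * ((power_gap (k + 2) y - power_gap (k + 1) y) / y^2))"
      using assms unfolding W_def
      by (simp add: mult.left_commute[of "u - 1/2" for u] integral_affine_power
          integral_affine_power_first_moment)
    also have "\<dots> = (x^k * power_gap (k + 1) y) / y
          + (t - 1/2) * (c * x^k * (power_gap (k + 2) y - power_gap (k + 1) y)) / y^2"
      by (simp add: algebra_simps)
    also have "\<dots> = x * W t"
      unfolding mass moment W_def using assms
      by (simp add: field_simps power2_eq_square power3_eq_cube)
    finally show ?thesis .
  qed
  show ?thesis
    unfolding hammerstein_solution_def
    using fixed_point W_pos assms(1) by (auto simp: W_def intro!: continuous_intros)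
qed

lemma one_minus_power_less_one_plus_power:
  fixes s :: real
  assumes "0 < s" "k \<ge> 1"
  shows "(1 - s)^k < (1 + s)^k"
proof -
  have "(1 - s)^k \<le> \<bar>1 - s\<bar>^k" by (metis abs_ge_self power_abs)
  also have "\<dots> < (1 + s)^k" using assms by (intro power_strict_mono) auto
  finally show ?thesis .
qed

lemma power_gap_derivative:
  "(power_gap (Suc m) has_real_derivative ((1 + s/2)^m + (1 - s/2)^m) / 2) (at s)"
proof -
  have "((\<lambda>s. (1 + s/2)^Suc m - (1 - s/2)^Suc m) has_real_derivative
      real (Suc m) * (1 + s/2)^m * (1/2) - real (Suc m) * (1 - s/2)^m * (-1/2)) (at s)"
    by (auto intro!: derivative_eq_intros simp del: power_Suc)
  then have "(power_gap (Suc m) has_real_derivative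
      (real (Suc m) * (1 + s/2)^m * (1/2) - real (Suc m) * (1 - s/2)^m * (-1/2)) / real (Suc m)) (at s)"
    unfolding power_gap_def[abs_def] by (rule DERIV_cdivide)
  then show ?thesis by (rule DERIV_cong) (simp add: field_simps del: of_nat_Suc)
qed

(* G_(k+2) - G_(k+1) vanishes at 0 and has derivative (y/4)((1+y/2)^k - (1-y/2)^k) > 0,
   so it is positive for y > 0: the denominator of C_n(k) does not vanish. *)
lemma power_gap_strict_step:
  fixes y :: real
  assumes "0 < y" "k \<ge> 1"
  shows "power_gap (k + 1) y < power_gap (k + 2) y"
proof -
  define \<phi> where "\<phi> s = power_gap (Suc (Suc k)) s - power_gap (Suc k) s" for s
  have \<phi>_deriv: "(\<phi> has_real_derivative s/4 * ((1 + s/2)^k - (1 - s/2)^k)) (at s)" for s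
  proof -
    have "(\<phi> has_real_derivative ((1 + s/2)^Suc k + (1 - s/2)^Suc k) / 2
        - ((1 + s/2)^k + (1 - s/2)^k) / 2) (at s)"
      unfolding \<phi>_def[abs_def] by (intro DERIV_diff power_gap_derivative)
    then show ?thesis by (rule DERIV_cong) (simp add: field_simps)
  qed
  have "\<phi> 0 < \<phi> y"
  proof (rule DERIV_pos_imp_increasing_open[OF assms(1)])
    show "continuous_on {0..y} \<phi>"
      using \<phi>_deriv by (meson DERIV_isCont continuous_at_imp_continuous_on)
    fix s :: real assume "0 < s" "s < y"
    then have "(1 - s/2)^k < (1 + s/2)^k"
      using assms by (intro one_minus_power_less_one_plus_power) auto
    with \<open>0 < s\<close> show "\<exists>d. (\<phi> has_real_derivative d) (at s) \<and> 0 < d"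
      using \<phi>_deriv by force
  qed
  moreover have "\<phi> 0 = 0" by (simp add: \<phi>_def power_gap_def)
  ultimately show ?thesis by (simp add: \<phi>_def)
qed

lemma root_equation_as_power_gap:
  assumes "P_poly n k x = Q_poly n k x"
  shows "power_gap (k + 1) (x^(n - 1)) = x^(n - k)"
proof -
  have "(1 + x^(n - 1)/2)^(k + 1) - (1 - x^(n - 1)/2)^(k + 1) = real (k + 1) * x^(n - k)"
    using assms by (simp only: P_poly_def Q_poly_def)
  then show ?thesis by (simp add: power_gap_def del: of_nat_add)
qed

lemma C_const_as_power_gap:
  assumes "P_poly n k (xi n) = Q_poly n k (xi n)"
  shows "C_const k xi n = xi n^(3*n - k - 2) /
           (power_gap (k + 2) (xi n^(n - 1)) - power_gap (k + 1) (xi n^(n - 1)))"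
  unfolding C_const_def root_equation_as_power_gap[OF assms, symmetric]
  by (simp add: power_gap_def)

lemma affine_root_solution:
  fixes x :: real
  assumes "1 \<le> k" "k < n" "0 < x" "x < 1" and root: "P_poly n k x = Q_poly n k x"
  defines "y \<equiv> x^(n - 1)"
  defines "\<gamma> \<equiv> x^(3*n - k - 2) / (power_gap (k + 2) y - power_gap (k + 1) y)"
  shows "hammerstein_solution (\<lambda>t u. 1 + \<gamma>*(t - 1/2)*(u - 1/2)) k (\<lambda>u. x * (1 + y*(u - 1/2)))"
proof (rule affine_solution)
  show "0 < x" by fact
  show "0 < y" "y < 2"
    using assms(1-4) power_strict_decreasing[of 0 "n - 1" x] unfolding y_def by auto
  have mass: "power_gap (k + 1) y = x^(n - k)"
    unfolding y_def by (rule root_equation_as_power_gap[OF root])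
  have "x^k * x^(n - k) = x * y"
    using assms(2) unfolding y_def by (simp flip: power_add power_Suc)
  then show "x^k * power_gap (k + 1) y = x * y"
    unfolding mass .
  have "power_gap (k + 1) y < power_gap (k + 2) y"
    using \<open>0 < y\<close> assms(1) by (rule power_gap_strict_step)
  then have "\<gamma> * x^k * (power_gap (k + 2) y - power_gap (k + 1) y) = x^k * x^(3*n - k - 2)"
    unfolding \<gamma>_def by simp
  also have "\<dots> = x^(Suc ((n - 1) * 3))"
  proof -
    have "k + (3*n - k - 2) = Suc ((n - 1) * 3)" using assms(1,2) by simp
    then show ?thesis by (simp flip: power_add)
  qed
  also have "\<dots> = x * (x^(n - 1))^3"
    by (simp only: power_Suc power_mult)
  finally show "\<gamma> * x^k * (power_gap (k + 2) y - power_gap (k + 1) y) = x * y^3"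
    unfolding y_def .
qed

theorem theorem5p8:
  fixes k :: nat and xi :: "nat \<Rightarrow> real" and np :: "nat \<Rightarrow> nat" and p :: nat
  assumes "k \<ge> 4"
    and "\<forall>n>k. 0 < xi n \<and> xi n < 1 \<and> P_poly n k (xi n) = Q_poly n k (xi n)"
    and "strict_mono np" and "\<forall>q. np q > k"
    and "(\<lambda>q. xi (np q) ^ (np q - 1)) \<longlonglongrightarrow> alpha_lim xi"
    and "p \<in> N0 k xi np"
  shows "\<exists>f g :: real \<Rightarrow> real.
           continuous_on {0..1} f \<and> continuous_on {0..1} g \<and>
           (\<forall>t\<in>{0..1}. f t > 0) \<and> (\<forall>t\<in>{0..1}. g t > 0) \<and>
           (\<forall>t\<in>{0..1}. integral {0..1} (\<lambda>u. kernel k xi np p t u * f u ^ k) = f t) \<and>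
           (\<forall>t\<in>{0..1}. integral {0..1} (\<lambda>u. kernel k xi np p t u * g u ^ k) = g t) \<and>
           (\<exists>t\<in>{0..1}. f t \<noteq> g t)"
proof -
  define n where "n = np p"
  define x where "x = xi n"
  define y where "y = x^(n - 1)"
  have "k < n" using assms(4) unfolding n_def by blast
  then have x: "0 < x" "x < 1" and root: "P_poly n k x = Q_poly n k x"
    using assms(2) unfolding x_def by auto
  have kernel_eq: "kernel k xi np p = (\<lambda>t u. 1 + (x^(3*n - k - 2) /
      (power_gap (k + 2) y - power_gap (k + 1) y))*(t - 1/2)*(u - 1/2))"
    using root unfolding kernel_def gamma_seq_def x_def y_def n_def
    by (simp add: C_const_as_power_gap)
  define g where "g u = x * (1 + y*(u - 1/2))" for u
  have "hammerstein_solution (kernel k xi np p) k (\<lambda>_. 1)"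
    unfolding kernel_eq by (rule constant_one_solution)
  moreover have "hammerstein_solution (kernel k xi np p) k g"
    unfolding kernel_eq g_def[abs_def] y_def
    using assms(1) \<open>k < n\<close> x root by (intro affine_root_solution) auto
  moreover have "g 0 \<noteq> 1"
  proof -
    have "0 < y" using x unfolding y_def by simp
    then have "g 0 < x" using x unfolding g_def by (simp add: algebra_simps)
    with x show ?thesis by linarith
  qed
  ultimately show ?thesis
    unfolding hammerstein_solution_def
    by (intro exI[of _ "\<lambda>_. 1"] exI[of _ g]) (auto intro!: bexI[of _ 0])
qed

end
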